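(* Let $\Bbbk$ be a field with $\mathrm{char}(\Bbbk)\neq2$, $n\ge2$, $\mathbb{H}_{2^n}$ the Nichols Hopf algebra and $A$ a unital associative $\Bbbk$-algebra. Every partial action $\cdot$ of $\mathbb{H}_{2^n}$ on $A$ such that either $g\cdot1_A=1_A$, or $g\cdot 1_A=0$ and $x_i\cdot 1_A\in Z(A)$ for all $i\in\{1,\dots,n-1\}$, is symmetric, i.e. satisfies $h\cdot(k\cdot a)=(h_1k\cdot a)(h_2\cdot1_A)$ for all $h,k\in\mathbb{H}_{2^n}$, $a\in A$.
   Context: $\mathbb{H}_{2^n}$ is the Hopf algebra generated by $g,x_1,\dots,x_{n-1}$ with relations $g^2=1$, $x_i^2=0$, $x_ig=-gx_i$, $x_ix_j=-x_jx_i$; it has basis $\{g^{j_0}x_1^{j_1}\cdots x_{n-1}^{j_{n-1}}:j_i\in\{0,1\}\}$, with $\Delta(g)=g\otimes g$, $\varepsilon(g)=1$, $\Delta(x_i)=x_i\otimes1+g\otimes x_i$, $\varepsilon(x_i)=0$, $S(g)=g$, $S(x_i)=-gx_i$. $Z(A)$ is the center of $A$. For a bialgebra $H$ with $\Delta(h)=h_1\otimes h_2$, a partial action of $H$ on $A$ is a linear map $\cdot:H\otimes A\to A$ with $1_H\cdot a=a$, $h\cdot(ab)=(h_1\cdot a)(h_2\cdot b)$ and $h\cdot(k\cdot a)=(h_1\cdot1_A)(h_2k\cdot a)$ for all $h,k\in H$, $a,b\in A$. *)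

theory Defs
  imports Complex_Main
begin

text \<open>Basis of the Nichols Hopf algebra H_{2^n}: the pair (b, S) with S \<subseteq> {1..<n}
  stands for g^b x_{s_1} x_{s_2} ... x_{s_k}, where s_1 < ... < s_k enumerate S.
  Elements of H_{2^n} are coefficient functions on the basis (zero off the basis).\<close>

type_synonym hb = "bool \<times> nat set"

definition hbasis :: "nat \<Rightarrow> hb set" where
  "hbasis n = UNIV \<times> Pow {1..<n}"

definition Hn :: "nat \<Rightarrow> (hb \<Rightarrow> 'k::field) set" where
  "Hn n = {f. \<forall>p. p \<notin> hbasis n \<longrightarrow> f p = 0}"

definition hbas :: "hb \<Rightarrow> hb \<Rightarrow> 'k::field" where
  "hbas p = (\<lambda>q. if q = p then 1 else 0)"

definition inv_count :: "nat set \<Rightarrow> nat set \<Rightarrow> nat" where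
  "inv_count S T = card {(s, t). s \<in> S \<and> t \<in> T \<and> t < s}"

text \<open>Structure constants of the multiplication:
  (g^a X_S)(g^b X_T) = (-1)^(b|S|) g^(a+b) X_S X_T, and for disjoint S, T,
  X_S X_T = (-1)^(#{(s,t) in S x T. t < s}) X_(S \<union> T); X_S X_T = 0 otherwise.\<close>
definition bmul_coeff :: "hb \<Rightarrow> hb \<Rightarrow> hb \<Rightarrow> 'k::field" where
  "bmul_coeff p q r = (case p of (a, S) \<Rightarrow> case q of (b, T) \<Rightarrow>
     if S \<inter> T = {} \<and> r = (a \<noteq> b, S \<union> T)
     then (-1) ^ ((if b then card S else 0) + inv_count S T) else 0)"

definition hmul :: "nat \<Rightarrow> (hb \<Rightarrow> 'k::field) \<Rightarrow> (hb \<Rightarrow> 'k) \<Rightarrow> hb \<Rightarrow> 'k" where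
  "hmul n f h = (\<lambda>r. \<Sum>p\<in>hbasis n. \<Sum>q\<in>hbasis n. f p * h q * bmul_coeff p q r)"

text \<open>Structure constants of the comultiplication, obtained by expanding
  Delta(g^a x_{s_1}...x_{s_k}) = (g\<otimes>g)^a (x_{s_1}\<otimes>1 + g\<otimes>x_{s_1}) ... (x_{s_k}\<otimes>1 + g\<otimes>x_{s_k}):
  Delta(g^a X_S) = sum over T \<subseteq> S of (-1)^(#{(j,i). j \<in> S-T, i \<in> T, j < i})
     g^(a+|T|) X_(S-T) \<otimes> g^a X_T.
  delta_coeff p q r is the coefficient of q \<otimes> r in Delta(p).\<close>
definition delta_coeff :: "hb \<Rightarrow> hb \<Rightarrow> hb \<Rightarrow> 'k::field" where
  "delta_coeff p q r = (case p of (a, S) \<Rightarrow>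
     \<Sum>T\<in>Pow S. if q = (a \<noteq> odd (card T), S - T) \<and> r = (a, T)
                 then (-1) ^ card {(j, i). j \<in> S - T \<and> i \<in> T \<and> j < i} else 0)"

definition hdelta :: "nat \<Rightarrow> (hb \<Rightarrow> 'k::field) \<Rightarrow> hb \<Rightarrow> hb \<Rightarrow> 'k" where
  "hdelta n f q r = (\<Sum>p\<in>hbasis n. f p * delta_coeff p q r)"

definition k_algebra :: "('k::field \<Rightarrow> 'a::ring_1 \<Rightarrow> 'a) \<Rightarrow> bool" where
  "k_algebra scale \<longleftrightarrow> module scale \<and>
     (\<forall>c x y. scale c (x * y) = scale c x * y \<and> scale c (x * y) = x * scale c y)"

text \<open>The action, a linear map H \<otimes> A \<rightarrow> A, is given by its values act p a on basis
  elements p and extended linearly in the H-argument.\<close>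
definition hact :: "nat \<Rightarrow> ('k::field \<Rightarrow> 'a::ring_1 \<Rightarrow> 'a) \<Rightarrow> (hb \<Rightarrow> 'a \<Rightarrow> 'a)
    \<Rightarrow> (hb \<Rightarrow> 'k) \<Rightarrow> 'a \<Rightarrow> 'a" where
  "hact n scale act f a = (\<Sum>p\<in>hbasis n. scale (f p) (act p a))"

definition is_partial_action :: "nat \<Rightarrow> ('k::field \<Rightarrow> 'a::ring_1 \<Rightarrow> 'a) \<Rightarrow> (hb \<Rightarrow> 'a \<Rightarrow> 'a) \<Rightarrow> bool" where
  "is_partial_action n scale act \<longleftrightarrow>
     (\<forall>p\<in>hbasis n. \<forall>x y. act p (x + y) = act p x + act p y) \<and>
     (\<forall>p\<in>hbasis n. \<forall>c x. act p (scale c x) = scale c (act p x)) \<and>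
     (\<forall>a. hact n scale act (hbas (False, {})) a = a) \<and>
     (\<forall>h\<in>Hn n. \<forall>a b. hact n scale act h (a * b) =
        (\<Sum>q\<in>hbasis n. \<Sum>r\<in>hbasis n. scale (hdelta n h q r) (act q a * act r b))) \<and>
     (\<forall>h\<in>Hn n. \<forall>k\<in>Hn n. \<forall>a. hact n scale act h (hact n scale act k a) =
        (\<Sum>q\<in>hbasis n. \<Sum>r\<in>hbasis n.
           scale (hdelta n h q r) (act q 1 * hact n scale act (hmul n (hbas r) k) a)))"

definition is_symmetric :: "nat \<Rightarrow> ('k::field \<Rightarrow> 'a::ring_1 \<Rightarrow> 'a) \<Rightarrow> (hb \<Rightarrow> 'a \<Rightarrow> 'a) \<Rightarrow> bool" where
  "is_symmetric n scale act \<longleftrightarrow>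
     (\<forall>h\<in>Hn n. \<forall>k\<in>Hn n. \<forall>a. hact n scale act h (hact n scale act k a) =
        (\<Sum>q\<in>hbasis n. \<Sum>r\<in>hbasis n.
           scale (hdelta n h q r) (hact n scale act (hmul n (hbas q) k) a * act r 1)))"

end

theory Submission
  imports Defs
begin

text \<open>Both sides of the symmetry identity are bilinear in h and k, so it suffices to check it
  for basis elements h = g^x X_S and k, where both sides expand over the subsets T of S.

  If g.1 = 1, multiplicativity gives x_i.1 = 2 (x_i.1), so x_i.1 = 0, and the partial action
  axiom then kills g^b X_S.1 for every S \<noteq> {}. Only the term T = S survives on the left and
  only T = {} on the right; both are (g^x X_S k).a.

  If g.1 = 0, then g acts by 0, x_i and g x_i both act by left multiplication with the central
  element x_i.1, and g^b X_S acts by 0 as soon as |S| \<ge> 2. The identity is then checked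
  directly for |S| \<le> 2; for S = {i, j} the two surviving terms on the right carry opposite
  signs and cancel.\<close>

lemma finite_hbasis [simp]: "finite (hbasis n)"
  by (simp add: hbasis_def)

lemma mem_hbasis_iff [simp]: "(b, S) \<in> hbasis n \<longleftrightarrow> S \<subseteq> {1..<n}"
  by (auto simp: hbasis_def)

lemma hbas_in_Hn: "p \<in> hbasis n \<Longrightarrow> hbas p \<in> Hn n"
  by (auto simp: Hn_def hbas_def simp del: mem_hbasis_iff)

lemma sum_hbas_mult: "p \<in> hbasis n \<Longrightarrow> (\<Sum>q\<in>hbasis n. hbas p q * f q) = f p"
  by (simp add: hbas_def if_distrib[of "\<lambda>c. c * _"] cong: if_cong)

lemma hdelta_hbas: "p \<in> hbasis n \<Longrightarrow> hdelta n (hbas p) q r = delta_coeff p q r"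
  by (simp add: hdelta_def sum_hbas_mult)

lemma hmul_hbas_left:
  "q \<in> hbasis n \<Longrightarrow> hmul n (hbas q) k = (\<lambda>r. \<Sum>p\<in>hbasis n. k p * bmul_coeff q p r)"
  by (simp add: hmul_def mult.assoc sum_distrib_left[symmetric] sum_hbas_mult)

lemma hmul_hbas_hbas:
  assumes "q \<in> hbasis n" "p \<in> hbasis n"
  shows "hmul n (hbas q) (hbas p) = bmul_coeff q p"
proof
  fix r
  show "hmul n (hbas q) (hbas p) r = bmul_coeff q p r"
    using assms sum_hbas_mult[of p n "\<lambda>p'. bmul_coeff q p' r"]
    by (simp add: hmul_hbas_left mult.commute)
qed

lemma sum_Pow_singleton: "(\<Sum>T\<in>Pow {i}. f T) = f {} + f {i}"
proof -
  have "Pow {i} = {{}, {i}}"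
    by auto
  then show ?thesis
    by simp
qed

lemma sum_Pow_doubleton:
  assumes "i \<noteq> j"
  shows "(\<Sum>T\<in>Pow {i, j}. f T) = f {} + f {i} + f {j} + f {i, j}"
proof -
  have "Pow {i, j} = {{}, {i}, {j}, {i, j}}"
    by auto
  with assms show ?thesis
    by (simp add: add.assoc doubleton_eq_iff)
qed

lemma sum_swap_pairs:
  "(\<Sum>a\<in>A. \<Sum>b\<in>B. \<Sum>c\<in>C. \<Sum>d\<in>D. f a b c d) = (\<Sum>c\<in>C. \<Sum>d\<in>D. \<Sum>a\<in>A. \<Sum>b\<in>B. f a b c d)"
proof -
  have swap_inner: "(\<Sum>x\<in>X. \<Sum>c\<in>C. \<Sum>d\<in>D. g x c d) = (\<Sum>c\<in>C. \<Sum>d\<in>D. \<Sum>x\<in>X. g x c d)"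
    for X g
    by (subst sum.swap) (simp only: sum.swap[where B = D])
  show ?thesis
    by (simp only: swap_inner)
qed

text \<open>The sign of the term g^(x+|T|) X_(S-T) \<otimes> g^x X_T in Delta(g^x X_S), see delta_coeff.\<close>

definition delta_sign :: "nat set \<Rightarrow> nat set \<Rightarrow> 'k::field" where
  "delta_sign S T = (-1) ^ card {(j, i). j \<in> S - T \<and> i \<in> T \<and> j < i}"

lemma delta_sign_empty [simp]: "delta_sign S {} = 1"
  by (simp add: delta_sign_def)

lemma delta_sign_self [simp]: "delta_sign S S = 1"
  by (simp add: delta_sign_def)

lemma delta_sign_doubleton:
  assumes "i \<noteq> j"
  shows "delta_sign {i, j} {i} + delta_sign {i, j} {j} = (0 :: 'k::field)"
proof -
  have inversions: "{(l, m). l \<in> {i, j} - {i} \<and> m \<in> {i} \<and> l < m} = (if j < i then {(j, i)} else {})"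
    "{(l, m). l \<in> {i, j} - {j} \<and> m \<in> {j} \<and> l < m} = (if i < j then {(i, j)} else {})"
    using assms by auto
  show ?thesis
    unfolding delta_sign_def inversions using assms by (cases "i < j") simp_all
qed

locale algebra_scale =
  fixes scale :: "'k::field \<Rightarrow> 'a::ring_1 \<Rightarrow> 'a"
  assumes k_algebra: "k_algebra scale"
begin

sublocale vector_space scale
  using k_algebra by (simp add: k_algebra_def module_iff_vector_space)

lemma scale_mult_left: "scale c (x * y) = scale c x * y"
  using k_algebra by (simp add: k_algebra_def)

lemma hact_hbas: "p \<in> hbasis n \<Longrightarrow> hact n scale act (hbas p) a = act p a"
  by (simp add: hact_def hbas_def if_distrib[of "\<lambda>c. scale c _"] cong: if_cong)

lemma hact_bmul_coeff:
  assumes "(y, T) \<in> hbasis n" "(z, U) \<in> hbasis n"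
  shows "hact n scale act (bmul_coeff (y, T) (z, U)) a =
    (if T \<inter> U = {}
     then scale ((-1) ^ ((if z then card T else 0) + inv_count T U)) (act (y \<noteq> z, T \<union> U) a)
     else 0)"
  using assms by (simp add: hact_def bmul_coeff_def if_distrib[of "\<lambda>c. scale c _"] cong: if_cong)

lemma sum_delta_coeff:
  assumes "(x, S) \<in> hbasis n"
  shows "(\<Sum>q\<in>hbasis n. \<Sum>r\<in>hbasis n. scale (delta_coeff (x, S) q r) (F q r)) =
    (\<Sum>T\<in>Pow S. scale (delta_sign S T) (F (x \<noteq> odd (card T), S - T) (x, T)))"
proof -
  have "(\<Sum>q\<in>hbasis n. \<Sum>r\<in>hbasis n. scale (delta_coeff (x, S) q r) (F q r)) =
    (\<Sum>q\<in>hbasis n. \<Sum>r\<in>hbasis n. \<Sum>T\<in>Pow S.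
       if r = (x, T) \<and> q = (x \<noteq> odd (card T), S - T) then scale (delta_sign S T) (F q r) else 0)"
    by (simp add: delta_coeff_def delta_sign_def scale_sum_left if_distrib[of "\<lambda>c. scale c _"]
        conj_commute cong: if_cong)
  also have "\<dots> = (\<Sum>T\<in>Pow S. \<Sum>q\<in>hbasis n. \<Sum>r\<in>hbasis n.
       if r = (x, T) \<and> q = (x \<noteq> odd (card T), S - T) then scale (delta_sign S T) (F q r) else 0)"
    by (simp only: sum.swap[where B = "Pow S"])
  also have "\<dots> = (\<Sum>T\<in>Pow S. scale (delta_sign S T) (F (x \<noteq> odd (card T), S - T) (x, T)))"
  proof (rule sum.cong[OF refl])
    fix T
    assume "T \<in> Pow S"
    with assms have "T \<subseteq> {1..<n}" "S - T \<subseteq> {1..<n}"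
      by auto
    then show "(\<Sum>q\<in>hbasis n. \<Sum>r\<in>hbasis n.
       if r = (x, T) \<and> q = (x \<noteq> odd (card T), S - T) then scale (delta_sign S T) (F q r) else 0) =
      scale (delta_sign S T) (F (x \<noteq> odd (card T), S - T) (x, T))"
      by (simp add: sum.delta' flip: if_if_eq_conj)
  qed
  finally show ?thesis .
qed

end

locale partial_hopf_action = algebra_scale scale
  for scale :: "'k::field \<Rightarrow> 'a::ring_1 \<Rightarrow> 'a" +
  fixes n :: nat and act :: "hb \<Rightarrow> 'a \<Rightarrow> 'a"
  assumes partial_action: "is_partial_action n scale act"
begin

abbreviation act_mul :: "hb \<Rightarrow> hb \<Rightarrow> 'a \<Rightarrow> 'a" where
  "act_mul p q a \<equiv> hact n scale act (bmul_coeff p q) a"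

lemma act_add: "p \<in> hbasis n \<Longrightarrow> act p (a + b) = act p a + act p b"
  using partial_action unfolding is_partial_action_def by blast

lemma act_scale: "p \<in> hbasis n \<Longrightarrow> act p (scale c a) = scale c (act p a)"
  using partial_action unfolding is_partial_action_def by blast

lemma act_zero: "p \<in> hbasis n \<Longrightarrow> act p 0 = 0"
  using act_add[of p 0 0] by simp

lemma act_sum: "p \<in> hbasis n \<Longrightarrow> act p (\<Sum>i\<in>I. f i) = (\<Sum>i\<in>I. act p (f i))"
  by (induct I rule: infinite_finite_induct) (simp_all add: act_zero act_add)

lemma act_unit [simp]: "act (False, {}) a = a"
proof -
  have "hact n scale act (hbas (False, {})) a = a"
    using partial_action unfolding is_partial_action_def by blast
  then show ?thesis
    by (simp add: hact_hbas)
qed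

lemma act_mult:
  assumes "(x, S) \<in> hbasis n"
  shows "act (x, S) (a * b) =
    (\<Sum>T\<in>Pow S. scale (delta_sign S T) (act (x \<noteq> odd (card T), S - T) a * act (x, T) b))"
proof -
  have "hact n scale act (hbas (x, S)) (a * b) =
      (\<Sum>q\<in>hbasis n. \<Sum>r\<in>hbasis n. scale (hdelta n (hbas (x, S)) q r) (act q a * act r b))"
    using partial_action hbas_in_Hn[OF assms] unfolding is_partial_action_def by blast
  then show ?thesis
    using assms by (simp add: hact_hbas hdelta_hbas sum_delta_coeff)
qed

lemma act_act:
  assumes "(x, S) \<in> hbasis n" "p \<in> hbasis n"
  shows "act (x, S) (act p a) =
    (\<Sum>T\<in>Pow S. scale (delta_sign S T) (act (x \<noteq> odd (card T), S - T) 1 * act_mul (x, T) p a))"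
proof -
  have "hact n scale act (hbas (x, S)) (hact n scale act (hbas p) a) =
      (\<Sum>q\<in>hbasis n. \<Sum>r\<in>hbasis n.
         scale (hdelta n (hbas (x, S)) q r) (act q 1 * hact n scale act (hmul n (hbas r) (hbas p)) a))"
    using partial_action hbas_in_Hn[OF assms(1)] hbas_in_Hn[OF assms(2)]
    unfolding is_partial_action_def by blast
  then show ?thesis
    using assms by (simp add: hact_hbas hdelta_hbas hmul_hbas_hbas sum_delta_coeff)
qed

lemma act_mult_singleton:
  assumes "i \<in> {1..<n}"
  shows "act (x, {i}) (a * b) = act (x, {i}) a * act (x, {}) b + act (\<not> x, {}) a * act (x, {i}) b"
  using act_mult[of x "{i}" a b] assms by (simp add: sum_Pow_singleton)

lemma act_act_singleton:
  assumes "i \<in> {1..<n}" "T \<subseteq> {1..<n}"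
  shows "act (x, {i}) (act (y, T) a) =
    act (x, {i}) 1 * act_mul (x, {}) (y, T) a + act (\<not> x, {}) 1 * act_mul (x, {i}) (y, T) a"
  using act_act[of x "{i}" "(y, T)" a] assms by (simp add: sum_Pow_singleton)

lemma act_mul_empty_left:
  "T \<subseteq> {1..<n} \<Longrightarrow> act_mul (x, {}) (y, T) a = act (x \<noteq> y, T) a"
  by (simp add: hact_bmul_coeff inv_count_def)

lemma act_mul_singleton_left:
  assumes "i \<in> {1..<n}" "T \<subseteq> {1..<n}"
  shows "act_mul (x, {i}) (y, T) a =
    (if i \<in> T then 0 else scale ((-1) ^ ((if y then 1 else 0) + inv_count {i} T)) (act (x \<noteq> y, insert i T) a))"
  using assms by (simp add: hact_bmul_coeff)

text \<open>The right-hand side (h_1 k.a)(h_2.1) of the symmetry identity for h = g^x X_S and k = p.\<close>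

definition sym_expansion :: "bool \<Rightarrow> nat set \<Rightarrow> hb \<Rightarrow> 'a \<Rightarrow> 'a" where
  "sym_expansion x S p a = (\<Sum>T\<in>Pow S.
     scale (delta_sign S T) (act_mul (x \<noteq> odd (card T), S - T) p a * act (x, T) 1))"

lemma sym_expansion_empty: "sym_expansion x {} p a = act_mul (x, {}) p a * act (x, {}) 1"
  by (simp add: sym_expansion_def)

lemma sym_expansion_singleton:
  "sym_expansion x {i} p a = act_mul (x, {i}) p a * act (x, {}) 1 + act_mul (\<not> x, {}) p a * act (x, {i}) 1"
  by (simp add: sym_expansion_def sum_Pow_singleton)

lemma sym_expansion_doubleton:
  assumes "i \<noteq> j"
  shows "sym_expansion x {i, j} p a =
    act_mul (x, {i, j}) p a * act (x, {}) 1
    + scale (delta_sign {i, j} {i}) (act_mul (\<not> x, {j}) p a * act (x, {i}) 1)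
    + scale (delta_sign {i, j} {j}) (act_mul (\<not> x, {i}) p a * act (x, {j}) 1)
    + act_mul (x, {}) p a * act (x, {i, j}) 1"
proof -
  have "{i, j} - {i} = {j}" "{i, j} - {j} = {i}"
    using assms by auto
  then show ?thesis
    using assms by (simp add: sym_expansion_def sum_Pow_doubleton)
qed

lemma hact_hmul_hbas:
  "q \<in> hbasis n \<Longrightarrow> hact n scale act (hmul n (hbas q) k) a = (\<Sum>p\<in>hbasis n. scale (k p) (act_mul q p a))"
  unfolding hmul_hbas_left hact_def scale_sum_left scale_sum_right scale_scale
  by (rule sum.swap)

lemma is_symmetric_if_basis:
  assumes basis: "\<And>x S p a. (x, S) \<in> hbasis n \<Longrightarrow> p \<in> hbasis n \<Longrightarrow>
    act (x, S) (act p a) = sym_expansion x S p a"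
  shows "is_symmetric n scale act"
  unfolding is_symmetric_def
proof (intro ballI allI)
  have basis_delta: "act p (act p' a) =
      (\<Sum>q\<in>hbasis n. \<Sum>r\<in>hbasis n. scale (delta_coeff p q r) (act_mul q p' a * act r 1))"
    if "p \<in> hbasis n" "p' \<in> hbasis n" for p p' a
    using basis[of "fst p" "snd p" p' a] that by (cases p) (simp add: sym_expansion_def sum_delta_coeff)
  fix h k :: "hb \<Rightarrow> 'k" and a
  have "hact n scale act h (hact n scale act k a) =
      (\<Sum>p\<in>hbasis n. \<Sum>p'\<in>hbasis n. \<Sum>q\<in>hbasis n. \<Sum>r\<in>hbasis n.
         scale (h p * k p' * delta_coeff p q r) (act_mul q p' a * act r 1))"
    by (simp add: hact_def act_sum act_scale basis_delta scale_sum_right mult.assoc)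
  also have "\<dots> = (\<Sum>q\<in>hbasis n. \<Sum>r\<in>hbasis n. \<Sum>p\<in>hbasis n. \<Sum>p'\<in>hbasis n.
         scale (h p * k p' * delta_coeff p q r) (act_mul q p' a * act r 1))"
    by (rule sum_swap_pairs)
  also have "\<dots> = (\<Sum>q\<in>hbasis n. \<Sum>r\<in>hbasis n.
      scale (hdelta n h q r) (hact n scale act (hmul n (hbas q) k) a * act r 1))"
    by (intro sum.cong refl)
      (simp add: hdelta_def hact_hmul_hbas sum_distrib_right scale_sum_left scale_sum_right
        flip: scale_mult_left, subst sum.swap, simp add: mult_ac)
  finally show "hact n scale act h (hact n scale act k a) = (\<Sum>q\<in>hbasis n. \<Sum>r\<in>hbasis n.
      scale (hdelta n h q r) (hact n scale act (hmul n (hbas q) k) a * act r 1))" .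
qed

end

locale partial_hopf_action_g_one = partial_hopf_action scale n act
  for scale :: "'k::field \<Rightarrow> 'a::ring_1 \<Rightarrow> 'a" and n act +
  assumes g_one: "act (True, {}) 1 = 1"
begin

lemma x_one_eq_zero:
  assumes "i \<in> {1..<n}"
  shows "act (False, {i}) 1 = 0"
proof -
  have "act (False, {i}) 1 = act (False, {i}) 1 + act (False, {i}) 1"
    using act_mult_singleton[OF assms, of False 1 1] g_one by simp
  then show ?thesis
    by simp
qed

lemma act_one:
  assumes "S \<subseteq> {1..<n}"
  shows "act (x, S) 1 = (if S = {} then 1 else 0)"
proof -
  have "finite S"
    using assms finite_subset by blast
  from this assms show ?thesis
  proof (induction S arbitrary: x rule: finite_induct)
    case empty
    show ?case
      using g_one by (cases x) simp_all
  next
    case (insert i S)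
    then have i: "i \<in> {1..<n}" and S: "S \<subseteq> {1..<n}"
      by auto
    have "0 = act (False, {i}) (act (x, S) 1)"
      using insert.IH[OF S] x_one_eq_zero[OF i] act_zero i by simp
    also have "\<dots> = act_mul (False, {i}) (x, S) 1"
      using act_act_singleton[OF i S, of False x 1] x_one_eq_zero[OF i] g_one by simp
    also have "\<dots> = scale ((-1) ^ ((if x then 1 else 0) + inv_count {i} S)) (act (x, insert i S) 1)"
      using act_mul_singleton_left[OF i S] insert.hyps by simp
    finally show ?case
      by simp
  qed
qed

lemma act_act_basis:
  assumes p: "(x, S) \<in> hbasis n" "p \<in> hbasis n"
  shows "act (x, S) (act p a) = sym_expansion x S p a"
proof -
  have fin: "finite (Pow S)"
    using p finite_subset by auto
  have diff_in_range: "S - T \<subseteq> {1..<n}" for T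
    using p by auto
  have "act (x, S) (act p a) = (\<Sum>T\<in>Pow S. if T = S then act_mul (x, S) p a else 0)"
    unfolding act_act[OF p]
    using diff_in_range by (intro sum.cong refl) (auto simp: act_one)
  also have "\<dots> = (\<Sum>T\<in>Pow S. if T = {} then act_mul (x, S) p a else 0)"
    using fin by simp
  also have "\<dots> = sym_expansion x S p a"
    unfolding sym_expansion_def
    using p by (intro sum.cong refl) (auto simp: act_one)
  finally show ?thesis .
qed

lemma is_symmetric: "is_symmetric n scale act"
  using act_act_basis by (rule is_symmetric_if_basis)

end

locale partial_hopf_action_g_zero = partial_hopf_action scale n act
  for scale :: "'k::field \<Rightarrow> 'a::ring_1 \<Rightarrow> 'a" and n act +
  assumes g_one: "act (True, {}) 1 = 0"
    and x_one_central: "i \<in> {1..<n} \<Longrightarrow> act (False, {i}) 1 * b = b * act (False, {i}) 1"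
begin

definition x_one :: "nat \<Rightarrow> 'a" where
  "x_one i = act (False, {i}) 1"

lemma x_one_commute: "i \<in> {1..<n} \<Longrightarrow> x_one i * b = b * x_one i"
  unfolding x_one_def by (rule x_one_central)

lemma act_g_eq_zero [simp]: "act (True, {}) b = 0"
  using act_act[of True "{}" "(False, {})" b] g_one by (simp add: act_mul_empty_left)

lemma act_singleton:
  assumes i: "i \<in> {1..<n}"
  shows "act (y, {i}) b = x_one i * b"
proof -
  have gx_one: "act (True, {i}) 1 = x_one i"
  proof -
    have "0 = act (True, {i}) (act (True, {}) 1)"
      using g_one act_zero i by simp
    also have "\<dots> = act (True, {i}) 1 - x_one i"
      using act_act_singleton[OF i empty_subsetI, of True True 1]
        act_mul_singleton_left[OF i empty_subsetI] act_mul_empty_left[OF empty_subsetI]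
      by (simp add: inv_count_def x_one_def)
    finally show ?thesis
      by simp
  qed
  show ?thesis
  proof (cases y)
    case True
    then show ?thesis
      using act_mult_singleton[OF i, of True b 1] gx_one x_one_commute[OF i] by simp
  next
    case False
    then show ?thesis
      using act_mult_singleton[OF i, of False 1 b] by (simp add: x_one_def)
  qed
qed

lemma act_singleton_one: "i \<in> {1..<n} \<Longrightarrow> act (y, {i}) 1 = x_one i"
  using act_singleton by simp

lemma act_eq_zero_if_two_le_card:
  assumes "S \<subseteq> {1..<n}" "2 \<le> card S"
  shows "act (x, S) b = 0"
proof -
  have "finite S"
    using assms(1) finite_subset by blast
  from this assms show ?thesis
  proof (induction S arbitrary: x rule: finite_induct)
    case empty
    then show ?case
      by simp
  next
    case (insert i S)
    then have i: "i \<in> {1..<n}" and S: "S \<subseteq> {1..<n}" "S \<noteq> {}"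
      by auto
    have flip: "act (\<not> x, S) b = act (x, S) b"
    proof (cases "card S = 1")
      case True
      then obtain j where "S = {j}"
        by (auto simp: card_Suc_eq)
      with S act_singleton[of j] show ?thesis
        by simp
    next
      case False
      with S insert.hyps(1) have "2 \<le> card S"
        by (cases "card S") auto
      with S insert.IH show ?thesis
        by simp
    qed
    \<comment> \<open>expand g x_i.(g^(\<not>x) X_S.b) once by act_singleton and once by the partial action axiom\<close>
    have "x_one i * act (x, S) b = act (True, {i}) (act (\<not> x, S) b)"
      using act_singleton[OF i, of True] flip by simp
    also have "\<dots> = x_one i * act (x, S) b
        + scale ((-1) ^ ((if x then 0 else 1) + inv_count {i} S)) (act (x, insert i S) b)"
      using act_act_singleton[OF i S(1), of True "\<not> x" b] act_mul_empty_left[OF S(1)]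
        act_mul_singleton_left[OF i S(1)] act_singleton_one[OF i] insert.hyps(2)
      by simp
    finally show ?case
      by simp
  qed
qed

lemma act_flip:
  assumes "S \<subseteq> {1..<n}" "S \<noteq> {}"
  shows "act (\<not> x, S) b = act (x, S) b"
proof (cases "card S = 1")
  case True
  then obtain j where "S = {j}"
    by (auto simp: card_Suc_eq)
  with assms act_singleton[of j] show ?thesis
    by simp
next
  case False
  with assms have "2 \<le> card S"
    using finite_subset by (cases "card S") fastforce+
  with assms show ?thesis
    by (simp add: act_eq_zero_if_two_le_card)
qed

lemma act_mul_singleton_left_eq_x_one:
  assumes j: "j \<in> {1..<n}" and T: "T \<subseteq> {1..<n}"
  shows "act_mul (z, {j}) (y, T) a =
    (if T = {} then scale ((-1) ^ (if y then 1 else 0)) (x_one j * a) else 0)"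
proof (cases "T = {}")
  case True
  with act_mul_singleton_left[OF j T] act_singleton[OF j] show ?thesis
    by (simp add: inv_count_def)
next
  case False
  have "finite T"
    using T finite_subset by blast
  with False have "j \<notin> T \<Longrightarrow> 2 \<le> card (insert j T)"
    by (cases "card T") auto
  with False j T act_mul_singleton_left[OF j T] show ?thesis
    by (simp add: act_eq_zero_if_two_le_card)
qed

lemma act_mul_eq_zero_if_two_le_card:
  assumes "S \<subseteq> {1..<n}" "2 \<le> card S" "T \<subseteq> {1..<n}"
  shows "act_mul (z, S) (y, T) a = 0"
proof -
  have "card S \<le> card (S \<union> T)"
    using assms finite_subset by (intro card_mono) auto
  with assms show ?thesis
    by (simp add: hact_bmul_coeff act_eq_zero_if_two_le_card)
qed

lemma act_act_basis_empty:
  assumes "T \<subseteq> {1..<n}"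
  shows "act (x, {}) (act (y, T) a) = sym_expansion x {} (y, T) a"
  using act_mul_empty_left[OF assms] by (cases x) (simp_all add: sym_expansion_empty g_one)

lemma act_act_basis_singleton:
  assumes i: "i \<in> {1..<n}" and T: "T \<subseteq> {1..<n}"
  shows "act (x, {i}) (act (y, T) a) = sym_expansion x {i} (y, T) a"
proof -
  have "act (x, {i}) (act (y, T) a) = x_one i * act (y, T) a"
    using act_singleton[OF i] .
  also have "\<dots> = sym_expansion x {i} (y, T) a"
  proof (cases x)
    case True
    then show ?thesis
      using act_mul_empty_left[OF T] act_singleton_one[OF i] x_one_commute[OF i]
      by (simp add: sym_expansion_singleton g_one)
  next
    case False
    show ?thesis
    proof (cases "T = {}")
      case True
      with False show ?thesis
        using act_mul_empty_left[OF T] act_mul_singleton_left_eq_x_one[OF i T] act_singleton_one[OF i]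
          x_one_commute[OF i]
        by (cases y) (simp_all add: sym_expansion_singleton)
    next
      case T_nonempty: False
      with False show ?thesis
        using act_mul_empty_left[OF T] act_mul_singleton_left_eq_x_one[OF i T] act_singleton_one[OF i]
          x_one_commute[OF i] act_flip[OF T T_nonempty]
        by (simp add: sym_expansion_singleton)
    qed
  qed
  finally show ?thesis .
qed

lemma act_act_basis_doubleton:
  assumes ij: "i \<noteq> j" "{i, j} \<subseteq> {1..<n}" and T: "T \<subseteq> {1..<n}"
  shows "act (x, {i, j}) (act (y, T) a) = sym_expansion x {i, j} (y, T) a"
proof -
  have i: "i \<in> {1..<n}" and j: "j \<in> {1..<n}"
    using ij by auto
  have two: "2 \<le> card {i, j}"
    using ij by simp
  have "sym_expansion x {i, j} (y, T) a =
      scale (delta_sign {i, j} {i}) (act_mul (\<not> x, {j}) (y, T) a * x_one i)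
      + scale (delta_sign {i, j} {j}) (act_mul (\<not> x, {i}) (y, T) a * x_one j)"
    using sym_expansion_doubleton[OF ij(1)] act_mul_eq_zero_if_two_le_card[OF ij(2) two T]
      act_eq_zero_if_two_le_card[OF ij(2) two] act_singleton_one[OF i] act_singleton_one[OF j]
    by simp
  also have "\<dots> = 0"
  proof (cases "T = {}")
    case True
    define \<sigma> :: 'k where "\<sigma> = (-1) ^ (if y then 1 else 0)"
    have "x_one j * a * x_one i = x_one i * x_one j * a"
      using x_one_commute[OF i, of a] x_one_commute[OF i, of "x_one j"] by (simp add: mult.assoc)
    moreover have "x_one i * a * x_one j = x_one i * x_one j * a"
      using x_one_commute[OF j, of a] by (simp add: mult.assoc)
    ultimately have "scale (delta_sign {i, j} {i}) (act_mul (\<not> x, {j}) (y, T) a * x_one i)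
        + scale (delta_sign {i, j} {j}) (act_mul (\<not> x, {i}) (y, T) a * x_one j)
      = scale ((delta_sign {i, j} {i} + delta_sign {i, j} {j}) * \<sigma>) (x_one i * x_one j * a)"
      using act_mul_singleton_left_eq_x_one[OF i T] act_mul_singleton_left_eq_x_one[OF j T] True
      by (simp add: \<sigma>_def scale_left_distrib scale_left_diff_distrib flip: scale_mult_left)
    then show ?thesis
      by (simp add: delta_sign_doubleton[OF ij(1)])
  next
    case False
    with act_mul_singleton_left_eq_x_one[OF i T] act_mul_singleton_left_eq_x_one[OF j T] show ?thesis
      by simp
  qed
  finally show ?thesis
    using act_eq_zero_if_two_le_card[OF ij(2) two] by simp
qed

lemma act_act_basis_large:
  assumes S: "S \<subseteq> {1..<n}" "3 \<le> card S" and T: "T \<subseteq> {1..<n}"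
  shows "act (x, S) (act (y, T) a) = sym_expansion x S (y, T) a"
proof -
  have "sym_expansion x S (y, T) a = 0"
    unfolding sym_expansion_def
  proof (intro sum.neutral ballI)
    fix U
    assume "U \<in> Pow S"
    then have "U \<subseteq> S"
      by simp
    moreover have "finite S"
      using S(1) finite_subset by blast
    ultimately have U: "U \<subseteq> {1..<n}" "S - U \<subseteq> {1..<n}" "card (S - U) = card S - card U"
      using S(1) finite_subset card_Diff_subset by blast+
    show "scale (delta_sign S U) (act_mul (x \<noteq> odd (card U), S - U) (y, T) a * act (x, U) 1) = 0"
    proof (cases "2 \<le> card U")
      case True
      with act_eq_zero_if_two_le_card[OF U(1)] show ?thesis
        by simp
    next
      case False
      with S U act_mul_eq_zero_if_two_le_card[OF U(2) _ T] show ?thesis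
        by simp
    qed
  qed
  with act_eq_zero_if_two_le_card[OF S(1)] S(2) show ?thesis
    by simp
qed

lemma act_act_basis:
  assumes "(x, S) \<in> hbasis n" "p \<in> hbasis n"
  shows "act (x, S) (act p a) = sym_expansion x S p a"
proof -
  obtain y T where p: "p = (y, T)"
    by fastforce
  have S: "S \<subseteq> {1..<n}" and T: "T \<subseteq> {1..<n}"
    using assms p by auto
  have "finite S"
    using S finite_subset by blast
  then consider "S = {}" | i where "S = {i}" | i j where "i \<noteq> j" "S = {i, j}" | "3 \<le> card S"
  proof -
    have "card S = 0 \<or> card S = 1 \<or> card S = 2 \<or> 3 \<le> card S"
      by arith
    with \<open>finite S\<close> that show thesis
      by (auto simp: card_1_singleton_iff card_2_iff)
  qed
  then show ?thesis
  proof cases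
    case 1
    with T show ?thesis
      unfolding p by (simp add: act_act_basis_empty)
  next
    case (2 i)
    with S T show ?thesis
      unfolding p by (simp add: act_act_basis_singleton)
  next
    case (3 i j)
    with S T show ?thesis
      unfolding p by (simp add: act_act_basis_doubleton)
  next
    case 4
    with S T show ?thesis
      unfolding p by (simp add: act_act_basis_large)
  qed
qed

lemma is_symmetric: "is_symmetric n scale act"
  using act_act_basis by (rule is_symmetric_if_basis)

end

theorem theorem4p5:
  fixes scale :: "'k::field \<Rightarrow> 'a::ring_1 \<Rightarrow> 'a"
    and act :: "hb \<Rightarrow> 'a \<Rightarrow> 'a"
    and n :: nat
  assumes "(2::'k) \<noteq> 0"
    and "n \<ge> 2"
    and "k_algebra scale"
    and "is_partial_action n scale act"
    and "act (True, {}) 1 = 1 \<or>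
         (act (True, {}) 1 = 0 \<and>
          (\<forall>i\<in>{1..<n}. \<forall>b. act (False, {i}) 1 * b = b * act (False, {i}) 1))"
  shows "is_symmetric n scale act"
  using assms(5)
proof
  assume "act (True, {}) 1 = 1"
  with assms(3,4) interpret partial_hopf_action_g_one scale n act
    by unfold_locales
  show ?thesis
    by (rule is_symmetric)
next
  assume "act (True, {}) 1 = 0 \<and>
    (\<forall>i\<in>{1..<n}. \<forall>b. act (False, {i}) 1 * b = b * act (False, {i}) 1)"
  with assms(3,4) interpret partial_hopf_action_g_zero scale n act
    by unfold_locales auto
  show ?thesis
    by (rule is_symmetric)
qed

end
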